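(* Prioritized planning is suboptimal for the makespan objective in general for the class of P-solvable MAPF instances: there exists a P-solvable MAPF instance such that, for every priority ordering $\prec$, every solution consistent with $\prec$ has makespan strictly greater than the minimum makespan over all solutions of the instance.
   Context: A MAPF instance consists of a connected undirected graph $G=(V,E)$ and $M$ agents $a_1,\dots,a_M$; agent $a_i$ has a start vertex $s_i$ and a target vertex $t_i$, and start vertices are pairwise distinct, as are target vertices. Time is discrete; at each time step every agent either moves to an adjacent vertex or waits. A path for $a_i$ is a sequence $\pi_i=\langle \pi_i(0),\pi_i(1),\dots\rangle$ with $\pi_i(0)=s_i$, consecutive vertices equal or adjacent, and $\pi_i(t)=t_i$ for all $t\ge T_i$, where the arrival time $T_i$ is the least such time. Two agents collide if they occupy the same vertex at the same time, or traverse the same edge in opposite directions at the same time step. A solution is a collision-free set of paths, one per agent; its makespan is $\max_i T_i$. A priority ordering is a strict partial order $\prec$ on $\{1,\dots,M\}$ ($a_i$ has higher priority than $a_j$ iff $i\prec j$). A solution $\{\pi_i\}$ is consistent with $\prec$ if for every $i$ the arrival time of $\pi_i$ equals the minimum arrival time over all paths for $a_i$ that do not collide with any $\pi_k$ with $k\prec i$ (higher priority agents never wait for lower priority agents). A MAPF instance is P-solvable iff it has a solution consistent with some priority ordering. *)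

theory Defs
  imports Main
begin

definition graph_ok :: "'v set \<Rightarrow> ('v \<Rightarrow> 'v \<Rightarrow> bool) \<Rightarrow> bool" where
  "graph_ok V Adj \<longleftrightarrow> finite V \<and> V \<noteq> {}
     \<and> (\<forall>u w. Adj u w \<longrightarrow> u \<in> V \<and> w \<in> V)
     \<and> (\<forall>u w. Adj u w \<longrightarrow> Adj w u)
     \<and> (\<forall>u. \<not> Adj u u)
     \<and> (\<forall>u\<in>V. \<forall>w\<in>V. Adj\<^sup>*\<^sup>* u w)"

definition mapf_instance ::
  "'v set \<Rightarrow> ('v \<Rightarrow> 'v \<Rightarrow> bool) \<Rightarrow> nat \<Rightarrow> (nat \<Rightarrow> 'v) \<Rightarrow> (nat \<Rightarrow> 'v) \<Rightarrow> bool" where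
  "mapf_instance V Adj M s t \<longleftrightarrow> graph_ok V Adj
     \<and> (\<forall>i\<in>{1..M}. s i \<in> V \<and> t i \<in> V)
     \<and> inj_on s {1..M} \<and> inj_on t {1..M}"

definition is_path :: "('v \<Rightarrow> 'v \<Rightarrow> bool) \<Rightarrow> 'v \<Rightarrow> 'v \<Rightarrow> (nat \<Rightarrow> 'v) \<Rightarrow> bool" where
  "is_path Adj a b \<pi> \<longleftrightarrow> \<pi> 0 = a
     \<and> (\<forall>k. \<pi> (Suc k) = \<pi> k \<or> Adj (\<pi> k) (\<pi> (Suc k)))
     \<and> (\<exists>T. \<forall>k\<ge>T. \<pi> k = b)"

definition arrival :: "'v \<Rightarrow> (nat \<Rightarrow> 'v) \<Rightarrow> nat" where
  "arrival b \<pi> = (LEAST T. \<forall>k\<ge>T. \<pi> k = b)"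

definition collide :: "(nat \<Rightarrow> 'v) \<Rightarrow> (nat \<Rightarrow> 'v) \<Rightarrow> bool" where
  "collide \<pi> \<sigma> \<longleftrightarrow> (\<exists>k. \<pi> k = \<sigma> k \<or> (\<pi> k = \<sigma> (Suc k) \<and> \<pi> (Suc k) = \<sigma> k))"

definition is_solution ::
  "('v \<Rightarrow> 'v \<Rightarrow> bool) \<Rightarrow> nat \<Rightarrow> (nat \<Rightarrow> 'v) \<Rightarrow> (nat \<Rightarrow> 'v) \<Rightarrow> (nat \<Rightarrow> nat \<Rightarrow> 'v) \<Rightarrow> bool" where
  "is_solution Adj M s t P \<longleftrightarrow>
     (\<forall>i\<in>{1..M}. is_path Adj (s i) (t i) (P i))
     \<and> (\<forall>i\<in>{1..M}. \<forall>j\<in>{1..M}. i \<noteq> j \<longrightarrow> \<not> collide (P i) (P j))"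

definition makespan :: "nat \<Rightarrow> (nat \<Rightarrow> 'v) \<Rightarrow> (nat \<Rightarrow> nat \<Rightarrow> 'v) \<Rightarrow> nat" where
  "makespan M t P = Max (insert 0 ((\<lambda>i. arrival (t i) (P i)) ` {1..M}))"

definition min_makespan ::
  "('v \<Rightarrow> 'v \<Rightarrow> bool) \<Rightarrow> nat \<Rightarrow> (nat \<Rightarrow> 'v) \<Rightarrow> (nat \<Rightarrow> 'v) \<Rightarrow> nat" where
  "min_makespan Adj M s t = (LEAST m. \<exists>P. is_solution Adj M s t P \<and> makespan M t P = m)"

text \<open>Priority ordering: strict partial order on the agents {1..M};
  prec i j means a_i has higher priority than a_j.\<close>

definition priority_ordering :: "nat \<Rightarrow> (nat \<Rightarrow> nat \<Rightarrow> bool) \<Rightarrow> bool" where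
  "priority_ordering M prec \<longleftrightarrow>
     (\<forall>i j. prec i j \<longrightarrow> i \<in> {1..M} \<and> j \<in> {1..M})
     \<and> (\<forall>i. \<not> prec i i)
     \<and> (\<forall>i j k. prec i j \<longrightarrow> prec j k \<longrightarrow> prec i k)"

definition consistent ::
  "('v \<Rightarrow> 'v \<Rightarrow> bool) \<Rightarrow> nat \<Rightarrow> (nat \<Rightarrow> 'v) \<Rightarrow> (nat \<Rightarrow> 'v) \<Rightarrow> (nat \<Rightarrow> nat \<Rightarrow> bool)
     \<Rightarrow> (nat \<Rightarrow> nat \<Rightarrow> 'v) \<Rightarrow> bool" where
  "consistent Adj M s t prec P \<longleftrightarrow> is_solution Adj M s t P
     \<and> (\<forall>i\<in>{1..M}. arrival (t i) (P i) =
          (LEAST T. \<exists>\<pi>. is_path Adj (s i) (t i) \<pi> \<and> arrival (t i) \<pi> = T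
                        \<and> (\<forall>k. prec k i \<longrightarrow> \<not> collide \<pi> (P k))))"

definition P_solvable ::
  "('v \<Rightarrow> 'v \<Rightarrow> bool) \<Rightarrow> nat \<Rightarrow> (nat \<Rightarrow> 'v) \<Rightarrow> (nat \<Rightarrow> 'v) \<Rightarrow> bool" where
  "P_solvable Adj M s t \<longleftrightarrow>
     (\<exists>prec P. priority_ordering M prec \<and> consistent Adj M s t prec P)"

end

theory Submission
  imports Defs
begin

(* Take the tree with edges 0-1, 0-2, 0-3, 1-4, 1-5, agent 1 going from 0 to 4 and agent 2
   from 4 to 2: the agents must pass each other on the path 4-1-0. If agent 1 dodges into
   leaf 5 while agent 2 passes, the makespan is 4. But in every priority ordering some agent
   has no agent of higher priority, so it follows a shortest path. If this is agent 1
   (0-1-4), agent 2 is trapped in leaf 4; if it is agent 2 (4-1-0-2), agent 1 must step aside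
   into leaf 2 or 3 and cannot reach 4 before time 5. Giving agent 2 priority does admit a
   consistent solution, so the instance is P-solvable. *)

lemma is_path_start: "is_path Adj a b \<pi> \<Longrightarrow> \<pi> 0 = a"
  unfolding is_path_def by blast

(* The later time l is a separate variable so that the lemma can be instantiated at
   numerals without creating Suc terms; the same holds for not_collide_at. *)
lemma is_path_move:
  "is_path Adj a b \<pi> \<Longrightarrow> l = Suc k \<Longrightarrow> \<pi> l = \<pi> k \<or> Adj (\<pi> k) (\<pi> l)"
  unfolding is_path_def by blast

lemma is_path_at_target:
  assumes "is_path Adj a b \<pi>" and "arrival b \<pi> \<le> k"
  shows "\<pi> k = b"
proof -
  from assms(1) obtain T where "\<forall>k\<ge>T. \<pi> k = b"
    unfolding is_path_def by blast
  then have "\<forall>k\<ge>arrival b \<pi>. \<pi> k = b"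
    unfolding arrival_def by (rule LeastI)
  with assms(2) show ?thesis by blast
qed

lemma ex_least_arrival_path:
  assumes "is_path Adj a b \<pi>" and "Q \<pi>"
  shows "\<exists>\<sigma>. is_path Adj a b \<sigma> \<and> Q \<sigma>
           \<and> arrival b \<sigma> = (LEAST T. \<exists>\<pi>. is_path Adj a b \<pi> \<and> arrival b \<pi> = T \<and> Q \<pi>)"
  using LeastI_ex[of "\<lambda>T. \<exists>\<pi>. is_path Adj a b \<pi> \<and> arrival b \<pi> = T \<and> Q \<pi>"] assms by blast

definition shortest_arrival :: "('v \<Rightarrow> 'v \<Rightarrow> bool) \<Rightarrow> 'v \<Rightarrow> 'v \<Rightarrow> nat" where
  "shortest_arrival Adj a b = (LEAST T. \<exists>\<pi>. is_path Adj a b \<pi> \<and> arrival b \<pi> = T)"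

lemma shortest_arrival_le: "is_path Adj a b \<pi> \<Longrightarrow> shortest_arrival Adj a b \<le> arrival b \<pi>"
  unfolding shortest_arrival_def by (rule Least_le) blast

lemma shortest_arrival_eqI:
  assumes "is_path Adj a b \<pi>" and "arrival b \<pi> \<le> T"
    and "\<And>\<sigma>. is_path Adj a b \<sigma> \<Longrightarrow> T \<le> arrival b \<sigma>"
  shows "shortest_arrival Adj a b = T"
  unfolding shortest_arrival_def
  by (rule Least_equality) (use assms le_antisym in blast)+

definition walk :: "'v list \<Rightarrow> nat \<Rightarrow> 'v" where
  "walk xs k = (if k < length xs then xs ! k else last xs)"

lemma walk_eq_last: "xs \<noteq> [] \<Longrightarrow> length xs \<le> Suc k \<Longrightarrow> walk xs k = last xs"
  by (auto simp: walk_def last_conv_nth le_Suc_eq)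

lemma is_path_walk:
  assumes "xs \<noteq> []" "hd xs = a" "last xs = b" "successively (\<lambda>u w. u = w \<or> Adj u w) xs"
  shows "is_path Adj a b (walk xs)"
proof -
  have "walk xs (Suc k) = walk xs k \<or> Adj (walk xs k) (walk xs (Suc k))" for k
  proof (cases "Suc k < length xs")
    case True
    then show ?thesis using successively_nth[OF assms(4) True] by (auto simp: walk_def)
  next
    case False
    then show ?thesis using assms(1) by (simp add: walk_eq_last)
  qed
  moreover have "walk xs k = b" if "length xs \<le> k" for k
    using assms(1,3) that by (simp add: walk_eq_last)
  moreover have "walk xs 0 = a"
    using assms(1,2) by (simp add: walk_def hd_conv_nth)
  ultimately show ?thesis
    unfolding is_path_def by blast
qed

lemma arrival_walk_le: "xs \<noteq> [] \<Longrightarrow> arrival (last xs) (walk xs) \<le> length xs - 1"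
  unfolding arrival_def by (rule Least_le) (simp add: walk_eq_last)

lemma collide_walk:
  assumes "xs \<noteq> []" "ys \<noteq> []"
  shows "collide (walk xs) (walk ys) \<longleftrightarrow> (\<exists>k < max (length xs) (length ys).
    walk xs k = walk ys k \<or> walk xs k = walk ys (Suc k) \<and> walk xs (Suc k) = walk ys k)"
    (is "_ \<longleftrightarrow> (\<exists>k < ?n. ?conflict k)")
proof
  assume "collide (walk xs) (walk ys)"
  then obtain k where k: "?conflict k" unfolding collide_def by blast
  show "\<exists>k < ?n. ?conflict k"
  proof (cases "k < ?n")
    case False
    then have "last xs = last ys" using k assms by (simp add: walk_eq_last)
    then have "?conflict (?n - 1)" using assms by (simp add: walk_eq_last)
    moreover have "?n - 1 < ?n" using assms by (simp add: max_def)
    ultimately show ?thesis by blast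
  qed (use k in blast)
qed (auto simp: collide_def)

lemma not_collide_at:
  "\<not> collide \<pi> \<sigma> \<Longrightarrow> l = Suc k \<Longrightarrow> \<pi> k \<noteq> \<sigma> k \<and> \<not> (\<pi> k = \<sigma> l \<and> \<pi> l = \<sigma> k)"
  unfolding collide_def by blast

lemma collide_commute: "collide \<pi> \<sigma> \<longleftrightarrow> collide \<sigma> \<pi>"
  unfolding collide_def by metis

lemma atLeastAtMost_1_2: "{1..2::nat} = {1, 2}"
  by auto

lemma is_solution_two_agents_iff:
  "is_solution Adj 2 s t P \<longleftrightarrow> is_path Adj (s 1) (t 1) (P 1) \<and> is_path Adj (s 2) (t 2) (P 2)
     \<and> \<not> collide (P 1) (P 2)"
  unfolding is_solution_def atLeastAtMost_1_2 using collide_commute by auto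

lemma makespan_le_iff: "makespan M t P \<le> n \<longleftrightarrow> (\<forall>i\<in>{1..M}. arrival (t i) (P i) \<le> n)"
  unfolding makespan_def by simp

lemma arrival_le_makespan: "i \<in> {1..M} \<Longrightarrow> arrival (t i) (P i) \<le> makespan M t P"
  using makespan_le_iff[of M t P "makespan M t P"] by blast

lemma min_makespan_le: "is_solution Adj M s t P \<Longrightarrow> min_makespan Adj M s t \<le> makespan M t P"
  unfolding min_makespan_def by (rule Least_le) blast

lemma priority_ordering_ex_top:
  assumes "priority_ordering M prec" and "0 < M"
  obtains i where "i \<in> {1..M}" and "\<And>k. \<not> prec k i"
proof -
  let ?R = "{(i, j). prec i j}"
  have "?R \<subseteq> {1..M} \<times> {1..M}" and "trans ?R" and "irrefl ?R"
    using assms(1) unfolding priority_ordering_def trans_def irrefl_def by auto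
  then have "wf ?R"
    by (intro finite_acyclic_wf) (auto intro: finite_subset simp: acyclic_irrefl)
  moreover have "1 \<in> {1..M}" using assms(2) by simp
  ultimately obtain i where "i \<in> {1..M}" and "\<And>k. (k, i) \<in> ?R \<Longrightarrow> k \<notin> {1..M}"
    by (rule wfE_min) blast
  with \<open>?R \<subseteq> {1..M} \<times> {1..M}\<close> show thesis
    using that by blast
qed

lemma consistent_top_arrival:
  assumes "consistent Adj M s t prec P" "i \<in> {1..M}" "\<And>k. \<not> prec k i"
  shows "arrival (t i) (P i) = shortest_arrival Adj (s i) (t i)"
  using assms unfolding consistent_def shortest_arrival_def by simp

definition tree_vertices :: "nat set" where
  "tree_vertices = {0..5}"

definition tree_edges :: "(nat \<times> nat) set" where
  "tree_edges = {(0, 1), (0, 2), (0, 3), (1, 4), (1, 5)}"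

definition tree_adj :: "nat \<Rightarrow> nat \<Rightarrow> bool" where
  "tree_adj u w \<longleftrightarrow> (u, w) \<in> tree_edges \<or> (w, u) \<in> tree_edges"

definition tree_starts :: "nat \<Rightarrow> nat" where
  "tree_starts i = (if i = 1 then 0 else 4)"

definition tree_targets :: "nat \<Rightarrow> nat" where
  "tree_targets i = (if i = 1 then 4 else 2)"

lemma tree_adj_iff:
  "tree_adj u w \<longleftrightarrow> u = 0 \<and> w = 1 \<or> u = 1 \<and> w = 0 \<or> u = 0 \<and> w = 2 \<or> u = 2 \<and> w = 0
     \<or> u = 0 \<and> w = 3 \<or> u = 3 \<and> w = 0 \<or> u = 1 \<and> w = 4 \<or> u = 4 \<and> w = 1
     \<or> u = 1 \<and> w = 5 \<or> u = 5 \<and> w = 1"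
  unfolding tree_adj_def tree_edges_def by auto

lemma symp_tree_adj: "symp tree_adj"
  by (auto intro: sympI simp: tree_adj_def)

lemma tree_adj_rtranclp_root: "u \<in> tree_vertices \<Longrightarrow> tree_adj\<^sup>*\<^sup>* u 0"
proof -
  have "tree_adj 1 0" "tree_adj 2 0" "tree_adj 3 0" "tree_adj 4 1" "tree_adj 5 1"
    by (simp_all add: tree_adj_iff)
  moreover assume "u \<in> tree_vertices"
  then have "u \<in> {0, 1, 2, 3, 4, 5}" unfolding tree_vertices_def by auto
  ultimately show ?thesis
    by (auto intro: converse_rtranclp_into_rtranclp)
qed

lemma mapf_instance_tree: "mapf_instance tree_vertices tree_adj 2 tree_starts tree_targets"
proof -
  have "tree_adj\<^sup>*\<^sup>* u w" if "u \<in> tree_vertices" "w \<in> tree_vertices" for u w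
    using tree_adj_rtranclp_root[OF that(1)] tree_adj_rtranclp_root[OF that(2)]
      sympD[OF symp_rtranclp[OF symp_tree_adj]] by (meson rtranclp_trans)
  then have "graph_ok tree_vertices tree_adj"
    unfolding graph_ok_def by (auto simp: tree_vertices_def tree_adj_iff)
  then show ?thesis
    unfolding mapf_instance_def atLeastAtMost_1_2
    by (auto simp: tree_vertices_def tree_starts_def tree_targets_def)
qed

lemma shortest_arrival_tree_0_4: "shortest_arrival tree_adj 0 4 = 2"
proof (rule shortest_arrival_eqI)
  show "is_path tree_adj 0 4 (walk [0, 1, 4])"
    by (rule is_path_walk) (auto simp: tree_adj_iff)
  show "arrival 4 (walk [0, 1, 4 :: nat]) \<le> 2"
    using arrival_walk_le[of "[0, 1, 4 :: nat]"] by simp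
  fix \<sigma> assume \<sigma>: "is_path tree_adj 0 4 \<sigma>"
  show "2 \<le> arrival 4 \<sigma>"
  proof (rule ccontr)
    assume "\<not> 2 \<le> arrival 4 \<sigma>"
    then have "\<sigma> 1 = 4" using is_path_at_target[OF \<sigma>] by simp
    then show False
      using is_path_start[OF \<sigma>] is_path_move[OF \<sigma>, of 1 0] by (simp add: tree_adj_iff)
  qed
qed

lemma shortest_arrival_tree_4_2: "shortest_arrival tree_adj 4 2 = 3"
proof (rule shortest_arrival_eqI)
  show "is_path tree_adj 4 2 (walk [4, 1, 0, 2])"
    by (rule is_path_walk) (auto simp: tree_adj_iff)
  show "arrival 2 (walk [4, 1, 0, 2 :: nat]) \<le> 3"
    using arrival_walk_le[of "[4, 1, 0, 2 :: nat]"] by simp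
  fix \<sigma> assume \<sigma>: "is_path tree_adj 4 2 \<sigma>"
  show "3 \<le> arrival 2 \<sigma>"
  proof (rule ccontr)
    assume "\<not> 3 \<le> arrival 2 \<sigma>"
    then have "\<sigma> 2 = 2" using is_path_at_target[OF \<sigma>] by simp
    then show False
      using is_path_start[OF \<sigma>] is_path_move[OF \<sigma>, of 1 0] is_path_move[OF \<sigma>, of 2 1]
      by (auto simp: tree_adj_iff)
  qed
qed

lemma tree_fast_agent1_traps_agent2:
  assumes x: "is_path tree_adj 0 4 x" "arrival 4 x \<le> 2" and y: "is_path tree_adj 4 b y"
  shows "collide x y"
proof (rule ccontr)
  assume "\<not> collide x y"
  note apart = not_collide_at[OF this]
  have "x 2 = 4" using is_path_at_target[OF x] .
  moreover from this have "x 1 = 1"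
    using is_path_start[OF x(1)] is_path_move[OF x(1), of 1 0] is_path_move[OF x(1), of 2 1]
    by (auto simp: tree_adj_iff)
  moreover from this have "y 1 = 4"
    using is_path_start[OF y] is_path_move[OF y, of 1 0] apart[of 2 1] by (auto simp: tree_adj_iff)
  moreover from calculation have "y 2 = 1"
    using is_path_move[OF y, of 2 1] apart[of 3 2] by (auto simp: tree_adj_iff)
  ultimately show False using apart[of 2 1] by simp
qed

lemma tree_fast_agent2_delays_agent1:
  assumes x: "is_path tree_adj 0 4 x" and y: "is_path tree_adj 4 2 y" "arrival 2 y \<le> 3"
    and "\<not> collide x y"
  shows "4 < arrival 4 x"
proof -
  note apart = not_collide_at[OF assms(4)]
  have "y 3 = 2" using is_path_at_target[OF y] .
  then have y12: "y 1 = 1" "y 2 = 0"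
    using is_path_start[OF y(1)] is_path_move[OF y(1), of 1 0] is_path_move[OF y(1), of 2 1]
      is_path_move[OF y(1), of 3 2] by (auto simp: tree_adj_iff)
  have "x 1 \<in> {0, 2, 3}"
    using is_path_start[OF x] is_path_move[OF x, of 1 0] apart[of 2 1] y12 by (auto simp: tree_adj_iff)
  then have "x 2 \<in> {2, 3}"
    using is_path_move[OF x, of 2 1] apart[of 2 1] apart[of 3 2] y12 by (auto simp: tree_adj_iff)
  then have "x 3 \<in> {0, 3}"
    using is_path_move[OF x, of 3 2] apart[of 3 2] apart[of 4 3] y12 \<open>y 3 = 2\<close>
    by (auto simp: tree_adj_iff)
  then have "x 4 \<noteq> 4"
    using is_path_move[OF x, of 4 3] by (auto simp: tree_adj_iff)
  then show ?thesis
    using is_path_at_target[OF x, of 4] by (meson not_less)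
qed

lemma min_makespan_tree_le_4: "min_makespan tree_adj 2 tree_starts tree_targets \<le> 4"
proof -
  let ?P = "\<lambda>i::nat. if i = 1 then walk [0, 1, 5, 1, 4] else walk [4, 4, 1, 0, 2]"
  have "\<not> collide (walk [0, 1, 5, 1, 4 :: nat]) (walk [4, 4, 1, 0, 2])"
    by (simp add: collide_walk walk_def numeral_eq_Suc Ex_less_Suc)
  then have "is_solution tree_adj 2 tree_starts tree_targets ?P"
    unfolding is_solution_two_agents_iff tree_starts_def tree_targets_def
    by (auto intro!: is_path_walk simp: tree_adj_iff)
  moreover have "makespan 2 tree_targets ?P \<le> 4"
    unfolding makespan_le_iff atLeastAtMost_1_2
    using arrival_walk_le[of "[0, 1, 5, 1, 4 :: nat]"] arrival_walk_le[of "[4, 4, 1, 0, 2 :: nat]"]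
    by (simp add: tree_targets_def)
  ultimately show ?thesis
    using min_makespan_le order_trans by blast
qed

lemma P_solvable_tree: "P_solvable tree_adj 2 tree_starts tree_targets"
proof -
  define prec :: "nat \<Rightarrow> nat \<Rightarrow> bool" where "prec i j \<longleftrightarrow> i = 2 \<and> j = 1" for i j
  define q :: "nat \<Rightarrow> nat" where "q = walk [4, 1, 0, 2]"
  have q: "is_path tree_adj 4 2 q"
    unfolding q_def by (rule is_path_walk) (auto simp: tree_adj_iff)
  have "arrival 2 q \<le> 3"
    using arrival_walk_le[of "[4, 1, 0, 2 :: nat]"] by (simp add: q_def)
  then have arrival_q: "arrival 2 q = shortest_arrival tree_adj 4 2"
    using shortest_arrival_le[OF q] shortest_arrival_tree_4_2 by simp
  have "is_path tree_adj 0 4 (walk [0, 3, 3, 0, 1, 4])"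
    by (rule is_path_walk) (auto simp: tree_adj_iff)
  moreover have "\<not> collide (walk [0, 3, 3, 0, 1, 4]) q"
    unfolding q_def by (simp add: collide_walk walk_def numeral_eq_Suc Ex_less_Suc)
  ultimately obtain x where x: "is_path tree_adj 0 4 x" "\<not> collide x q"
    "arrival 4 x = (LEAST T. \<exists>\<pi>. is_path tree_adj 0 4 \<pi> \<and> arrival 4 \<pi> = T \<and> \<not> collide \<pi> q)"
    using ex_least_arrival_path[of tree_adj 0 4 _ "\<lambda>\<pi>. \<not> collide \<pi> q"] by blast
  let ?P = "\<lambda>i::nat. if i = 1 then x else q"
  have "is_solution tree_adj 2 tree_starts tree_targets ?P"
    using x q by (simp add: is_solution_two_agents_iff tree_starts_def tree_targets_def)
  moreover have "(\<forall>k. prec k 1 \<longrightarrow> \<not> collide \<pi> (?P k)) \<longleftrightarrow> \<not> collide \<pi> q" for \<pi>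
    by (simp add: prec_def)
  moreover have "\<not> prec k 2" for k
    by (simp add: prec_def)
  ultimately have "consistent tree_adj 2 tree_starts tree_targets prec ?P"
    unfolding consistent_def atLeastAtMost_1_2 tree_starts_def tree_targets_def
    using x(3) arrival_q by (simp add: shortest_arrival_def)
  moreover have "priority_ordering 2 prec"
    unfolding priority_ordering_def prec_def by auto
  ultimately show ?thesis
    unfolding P_solvable_def by blast
qed

lemma consistent_tree_makespan_gt_4:
  assumes "priority_ordering 2 prec" and cons: "consistent tree_adj 2 tree_starts tree_targets prec P"
  shows "4 < makespan 2 tree_targets P"
proof -
  have "is_solution tree_adj 2 tree_starts tree_targets P"
    using cons unfolding consistent_def by blast
  then have p1: "is_path tree_adj 0 4 (P 1)" and p2: "is_path tree_adj 4 2 (P 2)"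
    and apart: "\<not> collide (P 1) (P 2)"
    by (simp_all add: is_solution_two_agents_iff tree_starts_def tree_targets_def)
  obtain i where i: "i \<in> {1..2}" and top: "\<And>k. \<not> prec k i"
    using priority_ordering_ex_top[OF assms(1)] by auto
  have top_arrival:
    "arrival (tree_targets i) (P i) = shortest_arrival tree_adj (tree_starts i) (tree_targets i)"
    by (rule consistent_top_arrival[OF cons i top])
  have "i = 2"
  proof (rule ccontr)
    assume "i \<noteq> 2"
    with i have "i = 1" by auto
    then have "arrival 4 (P 1) = 2"
      using top_arrival shortest_arrival_tree_0_4 by (simp add: tree_starts_def tree_targets_def)
    then show False
      using tree_fast_agent1_traps_agent2[OF p1 _ p2] apart by simp
  qed
  then have "arrival 2 (P 2) = 3"
    using top_arrival shortest_arrival_tree_4_2 by (simp add: tree_starts_def tree_targets_def)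
  then have "4 < arrival 4 (P 1)"
    using tree_fast_agent2_delays_agent1[OF p1 p2 _ apart] by simp
  also have "\<dots> \<le> makespan 2 tree_targets P"
    using arrival_le_makespan[of 1 2 tree_targets P] by (simp add: tree_targets_def)
  finally show ?thesis .
qed

theorem corollary1:
  shows "\<exists>(V :: nat set) Adj M s t.
     mapf_instance V Adj M s t \<and> P_solvable Adj M s t
     \<and> (\<forall>prec P. priority_ordering M prec \<longrightarrow> consistent Adj M s t prec P
           \<longrightarrow> makespan M t P > min_makespan Adj M s t)"
proof (intro exI conjI allI impI)
  show "mapf_instance tree_vertices tree_adj 2 tree_starts tree_targets"
    by (rule mapf_instance_tree)
  show "P_solvable tree_adj 2 tree_starts tree_targets"
    by (rule P_solvable_tree)
  fix prec P
  assume "priority_ordering 2 prec" "consistent tree_adj 2 tree_starts tree_targets prec P"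
  then show "makespan 2 tree_targets P > min_makespan tree_adj 2 tree_starts tree_targets"
    using consistent_tree_makespan_gt_4 min_makespan_tree_le_4 by (meson le_less_trans)
qed

end
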